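(* Let $\Gamma$ be a finite undirected simple graph with vertices $x_1,\dots,x_n$ and edge set $E$, and let $G_\Gamma$ be the associated group with commutator generators $y_1,\dots,y_N$. For $d\in\{1,\dots,n-1\}$ let $V_d=\{x_i : \deg(x_i)\ge d\}$ and \[H_d=\Big\{\prod_{x_i\in V_d}x_i^{z_i}\prod_{l=1}^N y_l^{t_l}\ :\ z_i,t_l\in\mathbb{Z}\Big\}\subseteq G_\Gamma\] (products taken in increasing order of indices). Then for every $d\in\{1,\dots,n-1\}$, $H_d$ is a characteristic subgroup of $G_\Gamma$, i.e. $\varphi(H_d)=H_d$ for every automorphism $\varphi$ of $G_\Gamma$.
   Context: For a finite undirected simple graph $\Gamma$ with vertex set $\{x_1,\dots,x_n\}$ and edge set $E$, the group $G_\Gamma$ is defined by the presentation with generators $x_1,\dots,x_n$ and $y_{i,j}$ for each pair $i<j$ with $x_ix_j\notin E$, and relations $[x_j,x_i]=1$ if $x_ix_j\in E$; $[x_j,x_i]=y_{i,j}$ if $x_ix_j\notin E$ and $i<j$; and $[x_l,y_{i,j}]=1$ for all $l$ and all such $y_{i,j}$. Let $N$ be the number of pairs $i<j$ with $x_ix_j\notin E$, and enumerate the $y_{i,j}$ as $y_1,\dots,y_N$. Every element of $G_\Gamma$ is uniquely of the form $x_1^{z_1}\cdots x_n^{z_n}y_1^{t_1}\cdots y_N^{t_N}$. *)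

theory Defs
  imports "HOL-Algebra.Group"
begin

text \<open>Graph on vertices x_1..x_n (indices 1..n), edge relation E (symmetric, irreflexive).
  Non-edge pairs (i,j) with i<j index the central generators y_{i,j}.\<close>

definition nonedge :: "(nat \<Rightarrow> nat \<Rightarrow> bool) \<Rightarrow> nat \<Rightarrow> (nat \<times> nat) set" where
  "nonedge E n = {(i,j). 1 \<le> i \<and> i < j \<and> j \<le> n \<and> \<not> E i j}"

text \<open>An element x_1^{z_1}...x_n^{z_n} prod y_{i,j}^{t_{i,j}} is encoded by its normal form (z,t).\<close>

definition G_carrier :: "(nat \<Rightarrow> nat \<Rightarrow> bool) \<Rightarrow> nat \<Rightarrow> ((nat \<Rightarrow> int) \<times> (nat \<times> nat \<Rightarrow> int)) set" where
  "G_carrier E n = {(z,t). (\<forall>i. i \<notin> {1..n} \<longrightarrow> z i = 0) \<and> (\<forall>p. p \<notin> nonedge E n \<longrightarrow> t p = 0)}"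

text \<open>Multiplication of normal forms, using [x_j,x_i] = x_j^{-1} x_i^{-1} x_j x_i = y_{i,j} (i<j),
  i.e. x_j x_i = x_i x_j y_{i,j}, with y's central:
  (x^a Y)(x^b Y') = x^{a+b} Y Y' prod_{(k,j) non-edge, k<j} y_{k,j}^{a_j b_k}.\<close>

definition G_mult :: "(nat \<Rightarrow> nat \<Rightarrow> bool) \<Rightarrow> nat \<Rightarrow>
    ((nat \<Rightarrow> int) \<times> (nat \<times> nat \<Rightarrow> int)) \<Rightarrow> ((nat \<Rightarrow> int) \<times> (nat \<times> nat \<Rightarrow> int)) \<Rightarrow>
    ((nat \<Rightarrow> int) \<times> (nat \<times> nat \<Rightarrow> int))" where
  "G_mult E n g h =
     ((\<lambda>i. fst g i + fst h i),
      (\<lambda>(k,j). snd g (k,j) + snd h (k,j) +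
                (if (k,j) \<in> nonedge E n then fst g j * fst h k else 0)))"

definition G_Gamma :: "(nat \<Rightarrow> nat \<Rightarrow> bool) \<Rightarrow> nat \<Rightarrow> ((nat \<Rightarrow> int) \<times> (nat \<times> nat \<Rightarrow> int)) monoid" where
  "G_Gamma E n = \<lparr> carrier = G_carrier E n, mult = G_mult E n, one = ((\<lambda>_. 0), (\<lambda>_. 0)) \<rparr>"

definition vdeg :: "(nat \<Rightarrow> nat \<Rightarrow> bool) \<Rightarrow> nat \<Rightarrow> nat \<Rightarrow> nat" where
  "vdeg E n i = card {j \<in> {1..n}. E i j}"

definition V_d :: "(nat \<Rightarrow> nat \<Rightarrow> bool) \<Rightarrow> nat \<Rightarrow> nat \<Rightarrow> nat set" where
  "V_d E n d = {i \<in> {1..n}. d \<le> vdeg E n i}"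

definition H_d :: "(nat \<Rightarrow> nat \<Rightarrow> bool) \<Rightarrow> nat \<Rightarrow> nat \<Rightarrow> ((nat \<Rightarrow> int) \<times> (nat \<times> nat \<Rightarrow> int)) set" where
  "H_d E n d = {g \<in> G_carrier E n. \<forall>i. i \<notin> V_d E n d \<longrightarrow> fst g i = 0}"

end

theory Submission
  imports Complex_Main Defs "HOL-Algebra.Generated_Groups" "HOL-Library.Function_Algebras"
begin

text \<open>Writing elements in normal form x^z y^t, the projection to z is the abelianisation of
  G_Gamma. As G_Gamma is generated by the x_i, every endomorphism acts on it by the integer matrix
  whose columns are the z-parts of the images of the x_i. So it suffices that an automorphism never
  sends an x_i with deg x_i \<ge> d to an element with nonzero x_m-coordinate, deg x_m < d. This is
  detected by the dimension of the real span of the abelianised centraliser: for x_i it is at least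
  deg x_i + 1, as x_i commutes with itself and its neighbours; for an element with nonzero
  x_m-coordinate it is at most deg x_m + 1, since away from the neighbours of x_m everything in its
  centraliser is proportional to it. Automorphisms preserve this dimension.\<close>

section \<open>Spans of real functions\<close>

(* Functions into real have no real_vector instance, so the vector space structure is set up by hand. *)
definition scale_fun :: "real \<Rightarrow> ('a \<Rightarrow> real) \<Rightarrow> 'a \<Rightarrow> real" where
  "scale_fun c v = (\<lambda>i. c * v i)"

interpretation fun_vs: vector_space "scale_fun :: real \<Rightarrow> ('a \<Rightarrow> real) \<Rightarrow> _"
  by unfold_locales (auto simp: scale_fun_def algebra_simps)

definition rank_at_most :: "nat \<Rightarrow> ('a \<Rightarrow> real) set \<Rightarrow> bool" where
  "rank_at_most d S \<longleftrightarrow> (\<exists>T. finite T \<and> card T \<le> d \<and> S \<subseteq> fun_vs.span T)"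

lemma rank_at_most_image:
  assumes "Vector_Spaces.linear scale_fun scale_fun f" "rank_at_most d S"
  shows "rank_at_most d (f ` S)"
proof -
  obtain T where T: "finite T" "card T \<le> d" "S \<subseteq> fun_vs.span T"
    using assms(2) by (auto simp: rank_at_most_def)
  have "f ` S \<subseteq> fun_vs.span (f ` T)"
    using module_hom.span_image[of scale_fun scale_fun f T] assms(1) T(3)
    by (auto simp: module_hom_iff_linear)
  moreover have "card (f ` T) \<le> d"
    using card_image_le[OF T(1)] T(2) by (rule order_trans)
  ultimately show ?thesis
    using T(1) by (auto simp: rank_at_most_def)
qed

lemma rank_at_most_subset: "S \<subseteq> S' \<Longrightarrow> rank_at_most d S' \<Longrightarrow> rank_at_most d S"
  by (auto simp: rank_at_most_def)

lemma not_rank_at_most_if_independent: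
  assumes "fun_vs.independent B" "finite B" "B \<subseteq> S" "d < card B"
  shows "\<not> rank_at_most d S"
  using fun_vs.independent_span_bound[OF _ assms(1)] assms(2-4)
  by (force simp: rank_at_most_def)

lemma linear_lincomb:
  "Vector_Spaces.linear scale_fun scale_fun (\<lambda>v m. \<Sum>i\<in>I. v i * a i m)"
  unfolding Vector_Spaces.linear_iff
  by (auto simp: fun_vs.vector_space_axioms scale_fun_def fun_eq_iff distrib_right sum.distrib
      sum_distrib_left mult.assoc)

lemma sum_apply: "(\<Sum>k\<in>A. f k) x = (\<Sum>k\<in>A. (f k x :: 'b :: comm_monoid_add))"
  by (induction A rule: infinite_finite_induct) auto

definition unit_vec :: "'a \<Rightarrow> 'a \<Rightarrow> real" where
  "unit_vec k = (\<lambda>l. if l = k then 1 else 0)"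

lemma independent_unit_vecs:
  assumes "finite K"
  shows "fun_vs.independent (unit_vec ` K)"
proof (rule fun_vs.independent_if_scalars_zero)
  fix f x assume sum0: "(\<Sum>y\<in>unit_vec ` K. scale_fun (f y) y) = 0" and x: "x \<in> unit_vec ` K"
  then obtain k where k: "k \<in> K" "x = unit_vec k" by blast
  have "inj_on unit_vec K"
    by (rule inj_onI) (metis unit_vec_def zero_neq_one)
  then have "0 = (\<Sum>l\<in>K. f (unit_vec l) * unit_vec l k)"
    using fun_cong[OF sum0, of k] by (simp add: sum.reindex sum_apply scale_fun_def)
  also have "\<dots> = f x"
    using k assms by (simp add: unit_vec_def if_distrib[of "\<lambda>x. _ * x"] cong: if_cong)
  finally show "f x = 0" ..
qed (use assms in blast)

lemma in_span_unit_vecs: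
  assumes "finite K" "\<forall>l. l \<notin> K \<longrightarrow> v l = 0"
  shows "v \<in> fun_vs.span (unit_vec ` K)"
proof -
  have "v = (\<Sum>k\<in>K. scale_fun (v k) (unit_vec k))"
    using assms
    by (auto simp: fun_eq_iff sum_apply scale_fun_def unit_vec_def if_distrib[of "\<lambda>x. _ * x"]
        cong: if_cong)
  also have "\<dots> \<in> fun_vs.span (unit_vec ` K)"
    by (intro fun_vs.span_sum fun_vs.span_scale fun_vs.span_base imageI)
  finally show ?thesis .
qed

definition centraliser :: "('a, 'b) monoid_scheme \<Rightarrow> 'a \<Rightarrow> 'a set" where
  "centraliser G g = {h \<in> carrier G. g \<otimes>\<^bsub>G\<^esub> h = h \<otimes>\<^bsub>G\<^esub> g}"

lemma hom_centraliser:
  assumes "\<phi> \<in> hom G H" "g \<in> carrier G" "h \<in> centraliser G g"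
  shows "\<phi> h \<in> centraliser H (\<phi> g)"
  using assms by (auto simp: centraliser_def hom_in_carrier hom_mult[symmetric])

lemma (in group) aut_image_eq_if_aut_image_subset:
  assumes "\<And>\<psi>. \<psi> \<in> iso G G \<Longrightarrow> \<psi> ` H \<subseteq> H" "H \<subseteq> carrier G" "\<phi> \<in> iso G G"
  shows "\<phi> ` H = H"
proof
  show "\<phi> ` H \<subseteq> H"
    by (rule assms(1)[OF assms(3)])
  have "h = \<phi> (inv_into (carrier G) \<phi> h)" if "h \<in> carrier G" for h
    using assms(3) that by (simp add: iso_def bij_betw_def f_inv_into_f)
  then show "H \<subseteq> \<phi> ` H"
    using assms(1)[OF iso_set_sym[OF assms(3)]] assms(2) by blast
qed

section \<open>Normal forms in G_Gamma\<close>

type_synonym G_elem = "(nat \<Rightarrow> int) \<times> (nat \<times> nat \<Rightarrow> int)"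

lemma G_Gamma_simps [simp]:
  "carrier (G_Gamma E n) = G_carrier E n"
  "mult (G_Gamma E n) = G_mult E n"
  "one (G_Gamma E n) = ((\<lambda>_. 0), (\<lambda>_. 0))"
  by (simp_all add: G_Gamma_def)

lemma fst_G_mult [simp]: "fst (G_mult E n g h) = (\<lambda>i. fst g i + fst h i)"
  by (simp add: G_mult_def)

lemma finite_nonedge: "finite (nonedge E n)"
  by (rule finite_subset[of _ "{1..n} \<times> {1..n}"]) (auto simp: nonedge_def)

lemma G_carrier_fst_zero: "g \<in> G_carrier E n \<Longrightarrow> i \<notin> {1..n} \<Longrightarrow> fst g i = 0"
  unfolding G_carrier_def mem_Collect_eq case_prod_beta by blast

lemma G_carrier_snd_zero: "g \<in> G_carrier E n \<Longrightarrow> p \<notin> nonedge E n \<Longrightarrow> snd g p = 0"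
  unfolding G_carrier_def mem_Collect_eq case_prod_beta by blast

definition G_inv :: "(nat \<Rightarrow> nat \<Rightarrow> bool) \<Rightarrow> nat \<Rightarrow> G_elem \<Rightarrow> G_elem" where
  "G_inv E n g =
     ((\<lambda>i. - fst g i),
      (\<lambda>(k, j). - snd g (k, j) + (if (k, j) \<in> nonedge E n then fst g j * fst g k else 0)))"

lemma G_inv_closed: "g \<in> G_carrier E n \<Longrightarrow> G_inv E n g \<in> G_carrier E n"
  by (auto simp: G_carrier_def G_inv_def)

lemma G_inv_mult: "G_mult E n (G_inv E n g) g = ((\<lambda>_. 0), (\<lambda>_. 0))"
  by (auto simp: G_mult_def G_inv_def fun_eq_iff)

lemma group_G_Gamma: "group (G_Gamma E n)"
proof (rule groupI)
  fix g h k
  show "g \<otimes>\<^bsub>G_Gamma E n\<^esub> h \<otimes>\<^bsub>G_Gamma E n\<^esub> k = g \<otimes>\<^bsub>G_Gamma E n\<^esub> (h \<otimes>\<^bsub>G_Gamma E n\<^esub> k)"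
    by (auto simp: G_mult_def algebra_simps intro!: ext split: prod.splits)
next
  fix g h assume "g \<in> carrier (G_Gamma E n)" "h \<in> carrier (G_Gamma E n)"
  then show "g \<otimes>\<^bsub>G_Gamma E n\<^esub> h \<in> carrier (G_Gamma E n)"
    by (auto simp: G_carrier_def G_mult_def split: prod.splits)
next
  fix g assume g: "g \<in> carrier (G_Gamma E n)"
  then show "\<one>\<^bsub>G_Gamma E n\<^esub> \<otimes>\<^bsub>G_Gamma E n\<^esub> g = g"
    by (auto simp: G_carrier_def G_mult_def intro!: ext split: prod.splits)
  show "\<exists>g'\<in>carrier (G_Gamma E n). g' \<otimes>\<^bsub>G_Gamma E n\<^esub> g = \<one>\<^bsub>G_Gamma E n\<^esub>"
    using g by (intro bexI[of _ "G_inv E n g"]) (simp_all add: G_inv_mult G_inv_closed)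
qed (simp add: G_carrier_def)

lemma inv_G_Gamma [simp]: "g \<in> G_carrier E n \<Longrightarrow> inv\<^bsub>G_Gamma E n\<^esub> g = G_inv E n g"
  by (rule group.inv_equality[OF group_G_Gamma]) (simp_all add: G_inv_mult G_inv_closed)

lemma fst_G_inv [simp]: "fst (G_inv E n g) = (\<lambda>i. - fst g i)"
  by (simp add: G_inv_def)

lemma G_mult_commute_iff:
  "G_mult E n g h = G_mult E n h g \<longleftrightarrow>
     (\<forall>k j. (k, j) \<in> nonedge E n \<longrightarrow> fst g j * fst h k = fst h j * fst g k)"
  by (auto simp: G_mult_def prod_eq_iff fun_eq_iff add.commute)

lemma commuting_coords_proportional:
  assumes sym: "\<forall>i j. E i j \<longrightarrow> E j i" and comm: "G_mult E n g h = G_mult E n h g"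
    and "m \<in> {1..n}" "l \<in> {1..n}" "\<not> E m l"
  shows "fst g m * fst h l = fst h m * fst g l"
proof (cases m l rule: linorder_cases)
  case less
  then have "(m, l) \<in> nonedge E n"
    using assms(3-5) by (auto simp: nonedge_def)
  then show ?thesis
    using comm G_mult_commute_iff by (metis mult.commute)
next
  case greater
  then have "(l, m) \<in> nonedge E n"
    using assms(3-5) sym by (auto simp: nonedge_def)
  then show ?thesis
    using comm G_mult_commute_iff by (metis mult.commute)
qed simp

definition xgen :: "nat \<Rightarrow> G_elem" where
  "xgen i = ((\<lambda>l. if l = i then 1 else 0), (\<lambda>_. 0))"

definition ypow :: "nat \<times> nat \<Rightarrow> int \<Rightarrow> G_elem" where
  "ypow p c = ((\<lambda>_. 0), (\<lambda>q. if q = p then c else 0))"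

lemma xgen_nat_pow:
  "xgen i [^]\<^bsub>G_Gamma E n\<^esub> (c::nat) = ((\<lambda>l. if l = i then int c else 0), (\<lambda>_. 0))"
  by (induction c) (auto simp: xgen_def G_mult_def nonedge_def fun_eq_iff)

definition ab_vec :: "G_elem \<Rightarrow> nat \<Rightarrow> real" where
  "ab_vec g = (\<lambda>i. real_of_int (fst g i))"

context
  fixes E :: "nat \<Rightarrow> nat \<Rightarrow> bool" and n :: nat
begin

interpretation G: group "G_Gamma E n"
  by (rule group_G_Gamma)

lemma xgen_in_carrier: "i \<in> {1..n} \<Longrightarrow> xgen i \<in> carrier (G_Gamma E n)"
  by (auto simp: xgen_def G_carrier_def)

lemma xgen_int_pow:
  assumes "i \<in> {1..n}"
  shows "xgen i [^]\<^bsub>G_Gamma E n\<^esub> (c::int) = ((\<lambda>l. if l = i then c else 0), (\<lambda>_. 0))"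
proof (cases "c < 0")
  case True
  have "xgen i [^]\<^bsub>G_Gamma E n\<^esub> nat (- c) \<in> carrier (G_Gamma E n)"
    by (rule G.nat_pow_closed[OF xgen_in_carrier[OF assms]])
  then show ?thesis
    using True by (simp add: int_pow_def2 xgen_nat_pow G_inv_def nonedge_def fun_eq_iff)
qed (simp add: int_pow_def2 xgen_nat_pow fun_eq_iff)

lemma xgen_int_pow_commute:
  assumes "(k, j) \<in> nonedge E n"
  shows "xgen j [^]\<^bsub>G_Gamma E n\<^esub> c \<otimes>\<^bsub>G_Gamma E n\<^esub> xgen k =
    xgen k \<otimes>\<^bsub>G_Gamma E n\<^esub> xgen j [^]\<^bsub>G_Gamma E n\<^esub> c \<otimes>\<^bsub>G_Gamma E n\<^esub> ypow (k, j) c"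
proof -
  have "j \<in> {1..n}"
    using assms by (auto simp: nonedge_def)
  then show ?thesis
    unfolding xgen_int_pow[OF \<open>j \<in> {1..n}\<close>]
    using assms by (auto simp: nonedge_def xgen_def ypow_def G_mult_def fun_eq_iff)
qed

lemma subgroup_generate_xgen: "subgroup (generate (G_Gamma E n) (xgen ` {1..n})) (G_Gamma E n)"
  by (rule G.generate_is_subgroup) (use xgen_in_carrier in blast)

lemma xgen_in_generate: "i \<in> {1..n} \<Longrightarrow> xgen i \<in> generate (G_Gamma E n) (xgen ` {1..n})"
  by (intro generate.incl imageI)

lemma xgen_int_pow_in_generate:
  "i \<in> {1..n} \<Longrightarrow> xgen i [^]\<^bsub>G_Gamma E n\<^esub> (c::int) \<in> generate (G_Gamma E n) (xgen ` {1..n})"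
  by (rule G.subgroup_int_pow_closed[OF subgroup_generate_xgen xgen_in_generate])

lemma ypow_in_generate:
  assumes p: "p \<in> nonedge E n"
  shows "ypow p c \<in> generate (G_Gamma E n) (xgen ` {1..n})"
proof -
  let ?X = "generate (G_Gamma E n) (xgen ` {1..n})"
  obtain k j where kj: "p = (k, j)" "k \<in> {1..n}" "j \<in> {1..n}"
    using p by (cases p) (auto simp: nonedge_def)
  let ?x = "xgen k" and ?z = "xgen j [^]\<^bsub>G_Gamma E n\<^esub> c"
  have in_X: "?x \<in> ?X" "?z \<in> ?X"
    using xgen_in_generate[OF kj(2)] xgen_int_pow_in_generate[OF kj(3)] .
  then have x_z: "?x \<in> carrier (G_Gamma E n)" "?z \<in> carrier (G_Gamma E n)"
    using subgroup.mem_carrier[OF subgroup_generate_xgen] by blast+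
  have y: "ypow p c \<in> carrier (G_Gamma E n)"
    using p by (auto simp: ypow_def G_carrier_def)
  have "?z \<otimes>\<^bsub>G_Gamma E n\<^esub> ?x = (?x \<otimes>\<^bsub>G_Gamma E n\<^esub> ?z) \<otimes>\<^bsub>G_Gamma E n\<^esub> ypow p c"
    using xgen_int_pow_commute p unfolding kj(1) by blast
  then have "ypow p c = inv\<^bsub>G_Gamma E n\<^esub> (?x \<otimes>\<^bsub>G_Gamma E n\<^esub> ?z) \<otimes>\<^bsub>G_Gamma E n\<^esub> (?z \<otimes>\<^bsub>G_Gamma E n\<^esub> ?x)"
    using G.inv_solve_left[OF y G.m_closed[OF x_z] G.m_closed[OF x_z(2,1)]] by blast
  then show ?thesis
    using subgroup.m_closed[OF subgroup_generate_xgen] subgroup.m_inv_closed[OF subgroup_generate_xgen] in_X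
    by metis
qed

lemma central_in_generate_xgen:
  assumes "g \<in> carrier (G_Gamma E n)" "fst g = (\<lambda>_. 0)"
  shows "g \<in> generate (G_Gamma E n) (xgen ` {1..n})"
proof -
  let ?X = "generate (G_Gamma E n) (xgen ` {1..n})"
  have "\<forall>g\<in>carrier (G_Gamma E n). fst g = (\<lambda>_. 0) \<longrightarrow> (\<forall>q. q \<notin> S \<longrightarrow> snd g q = 0) \<longrightarrow> g \<in> ?X"
    if "finite S" "S \<subseteq> nonedge E n" for S
    using that
  proof (induction S rule: finite_subset_induct)
    case empty
    show ?case
    proof (intro ballI impI)
      fix g :: G_elem
      assume "fst g = (\<lambda>_. 0)" "\<forall>q. q \<notin> {} \<longrightarrow> snd g q = 0"
      then have "g = \<one>\<^bsub>G_Gamma E n\<^esub>"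
        by (simp add: prod_eq_iff fun_eq_iff)
      then show "g \<in> ?X"
        using generate.one by metis
    qed
  next
    case (insert p S)
    show ?case
    proof (intro ballI impI)
      fix g assume g: "g \<in> carrier (G_Gamma E n)" "fst g = (\<lambda>_. 0)" "\<forall>q. q \<notin> insert p S \<longrightarrow> snd g q = 0"
      let ?g' = "((\<lambda>_::nat. 0::int), (snd g)(p := 0))"
      have "?g' \<in> ?X"
        using insert.IH g by (auto simp: G_carrier_def)
      moreover have "g = ?g' \<otimes>\<^bsub>G_Gamma E n\<^esub> ypow p (snd g p)"
        using g(2) by (auto simp: ypow_def G_mult_def prod_eq_iff fun_eq_iff)
      ultimately show "g \<in> ?X"
        using subgroup.m_closed[OF subgroup_generate_xgen] ypow_in_generate[OF insert.hyps(2)] by metis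
    qed
  qed
  then show ?thesis
    using assms finite_nonedge G_carrier_snd_zero by (metis G_Gamma_simps(1) order_refl)
qed

lemma carrier_G_Gamma_generate: "carrier (G_Gamma E n) = generate (G_Gamma E n) (xgen ` {1..n})"
proof
  let ?X = "generate (G_Gamma E n) (xgen ` {1..n})"
  note X = subgroup_generate_xgen
  have supported: "\<forall>g\<in>carrier (G_Gamma E n). (\<forall>i. i \<notin> S \<longrightarrow> fst g i = 0) \<longrightarrow> g \<in> ?X"
    if "finite S" "S \<subseteq> {1..n}" for S
    using that
  proof (induction S rule: finite_subset_induct)
    case empty
    then show ?case
      using central_in_generate_xgen by (simp add: fun_eq_iff)
  next
    case (insert j S)
    show ?case
    proof (intro ballI impI)
      fix g assume g: "g \<in> carrier (G_Gamma E n)" "\<forall>i. i \<notin> insert j S \<longrightarrow> fst g i = 0"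
      let ?p = "xgen j [^]\<^bsub>G_Gamma E n\<^esub> fst g j"
      let ?g' = "g \<otimes>\<^bsub>G_Gamma E n\<^esub> inv\<^bsub>G_Gamma E n\<^esub> ?p"
      have "?p \<in> ?X"
        using insert.hyps(2) by (rule xgen_int_pow_in_generate)
      then have p: "?p \<in> carrier (G_Gamma E n)" "?p \<in> ?X"
        using subgroup.mem_carrier[OF X] by blast+
      have g': "?g' \<in> carrier (G_Gamma E n)"
        by (intro G.m_closed G.inv_closed g(1) p(1))
      moreover have "\<forall>i. i \<notin> S \<longrightarrow> fst ?g' i = 0"
        using g(2) p(1) by (simp add: xgen_int_pow[OF insert.hyps(2)])
      ultimately have "?g' \<in> ?X"
        using insert.IH by blast
      moreover have "g = ?g' \<otimes>\<^bsub>G_Gamma E n\<^esub> ?p"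
        using G.inv_solve_right[OF g' g(1) p(1)] by blast
      ultimately show "g \<in> ?X"
        using subgroup.m_closed[OF X] p by metis
    qed
  qed
  show "carrier (G_Gamma E n) \<subseteq> ?X"
  proof
    fix g assume "g \<in> carrier (G_Gamma E n)"
    moreover have "\<forall>i. i \<notin> {1..n} \<longrightarrow> fst g i = 0"
      using G_carrier_fst_zero \<open>g \<in> carrier (G_Gamma E n)\<close> by simp
    ultimately show "g \<in> ?X"
      using supported[of "{1..n}"] by blast
  qed
  show "?X \<subseteq> carrier (G_Gamma E n)"
    by (rule subgroup.subset[OF X])
qed

lemma fst_hom_G_Gamma:
  assumes hom: "\<phi> \<in> hom (G_Gamma E n) (G_Gamma E' n')" and g: "g \<in> carrier (G_Gamma E n)"
  shows "fst (\<phi> g) = (\<lambda>m. \<Sum>i\<in>{1..n}. fst g i * fst (\<phi> (xgen i)) m)"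
proof -
  interpret \<phi>: group_hom "G_Gamma E n" "G_Gamma E' n'" \<phi>
    using hom group_G_Gamma by (simp add: group_hom_def group_hom_axioms_def)
  have "g \<in> generate (G_Gamma E n) (xgen ` {1..n})"
    using g carrier_G_Gamma_generate by blast
  then show ?thesis
  proof (induction rule: generate.induct)
    case one
    show ?case
      using \<phi>.hom_one by (simp add: fun_eq_iff)
  next
    case (incl h)
    then show ?case
      by (auto simp: xgen_def if_distrib[of "\<lambda>x. x * _"] cong: if_cong)
  next
    case (inv h)
    then obtain i where i: "i \<in> {1..n}" and h: "h = xgen i" by blast
    have "\<phi> (inv\<^bsub>G_Gamma E n\<^esub> h) = inv\<^bsub>G_Gamma E' n'\<^esub> \<phi> h"
      unfolding h by (rule \<phi>.hom_inv[OF xgen_in_carrier[OF i]])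
    moreover have "\<phi> h \<in> G_carrier E' n'" "h \<in> G_carrier E n"
      using \<phi>.hom_closed xgen_in_carrier[OF i] h by auto
    ultimately show ?case
      using i h by (simp add: xgen_def sum_negf if_distrib[of "\<lambda>x. x * _"] cong: if_cong)
  next
    case (eng h1 h2)
    have "h1 \<in> carrier (G_Gamma E n)" "h2 \<in> carrier (G_Gamma E n)"
      using eng.hyps carrier_G_Gamma_generate by blast+
    then have "\<phi> (h1 \<otimes>\<^bsub>G_Gamma E n\<^esub> h2) = \<phi> h1 \<otimes>\<^bsub>G_Gamma E' n'\<^esub> \<phi> h2"
      by (rule \<phi>.hom_mult)
    then show ?case
      using eng.IH by (simp add: fun_eq_iff distrib_right sum.distrib)
  qed
qed

section \<open>Centralisers of generators\<close>

lemma rank_centraliser_le_degree: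
  assumes sym: "\<forall>i j. E i j \<longrightarrow> E j i"
    and g: "g \<in> carrier (G_Gamma E n)" and gm: "fst g m \<noteq> 0" and deg: "vdeg E n m < d"
  shows "rank_at_most d (ab_vec ` centraliser (G_Gamma E n) g)"
proof -
  have m: "m \<in> {1..n}"
    using G_carrier_fst_zero g gm by (metis G_Gamma_simps(1))
  define N where "N = {l \<in> {1..n}. E m l}"
  define T where "T = insert (ab_vec g) (unit_vec ` N)"
  have "finite N"
    by (simp add: N_def)
  then have "card T \<le> Suc (card N)"
    using card_image_le[of N unit_vec] by (simp add: T_def card_insert_if)
  then have "card T \<le> d"
    using deg by (simp add: vdeg_def N_def)
  moreover have "ab_vec h \<in> fun_vs.span T" if "h \<in> centraliser (G_Gamma E n) g" for h
  proof -
    have h: "h \<in> carrier (G_Gamma E n)" and comm: "G_mult E n g h = G_mult E n h g"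
      using that by (auto simp: centraliser_def)
    (* Away from the neighbours of m, the abelianised h is proportional to that of g. *)
    define c where "c = real_of_int (fst h m) / real_of_int (fst g m)"
    have "(ab_vec h - scale_fun c (ab_vec g)) l = 0" if "l \<notin> N" for l
    proof -
      have "fst g m * fst h l = fst h m * fst g l"
      proof (cases "l \<in> {1..n}")
        case True
        then show ?thesis
          using commuting_coords_proportional[OF sym comm m] \<open>l \<notin> N\<close> by (cases "l = m") (auto simp: N_def)
      next
        case False
        then show ?thesis
          using G_carrier_fst_zero[of g] G_carrier_fst_zero[of h] g h by simp
      qed
      then have "real_of_int (fst g m) * real_of_int (fst h l) = real_of_int (fst h m) * real_of_int (fst g l)"
        by (metis of_int_mult)
      then show ?thesis
        using gm by (simp add: ab_vec_def scale_fun_def c_def field_simps)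
    qed
    then have "ab_vec h - scale_fun c (ab_vec g) \<in> fun_vs.span (unit_vec ` N)"
      by (intro in_span_unit_vecs \<open>finite N\<close>) blast
    moreover have "fun_vs.span (unit_vec ` N) \<subseteq> fun_vs.span T"
      by (rule fun_vs.span_mono) (auto simp: T_def)
    ultimately have "ab_vec h - scale_fun c (ab_vec g) \<in> fun_vs.span T"
      by blast
    moreover have "scale_fun c (ab_vec g) \<in> fun_vs.span T"
      by (auto simp: T_def intro: fun_vs.span_scale fun_vs.span_base)
    ultimately have "(ab_vec h - scale_fun c (ab_vec g)) + scale_fun c (ab_vec g) \<in> fun_vs.span T"
      by (rule fun_vs.span_add)
    then show ?thesis
      by simp
  qed
  moreover have "finite T"
    by (simp add: T_def \<open>finite N\<close>)
  ultimately show ?thesis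
    unfolding rank_at_most_def by blast
qed

lemma not_rank_centraliser_xgen:
  assumes sym: "\<forall>i j. E i j \<longrightarrow> E j i" and irrefl: "\<forall>i. \<not> E i i"
    and i: "i \<in> {1..n}" and deg: "d \<le> vdeg E n i"
  shows "\<not> rank_at_most d (ab_vec ` centraliser (G_Gamma E n) (xgen i))"
proof -
  define M where "M = insert i {l \<in> {1..n}. E i l}"
  have "finite M"
    by (simp add: M_def)
  have "inj unit_vec"
    by (rule injI) (metis unit_vec_def zero_neq_one)
  then have "card (unit_vec ` M) = card M"
    by (rule card_image[OF inj_on_subset]) simp
  also have "\<dots> = Suc (vdeg E n i)"
    using irrefl by (simp add: M_def vdeg_def)
  moreover have "unit_vec ` M \<subseteq> ab_vec ` centraliser (G_Gamma E n) (xgen i)"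
  proof
    fix v assume "v \<in> unit_vec ` M"
    then obtain l where l: "l \<in> M" and v: "v = unit_vec l"
      by blast
    have "l \<in> {1..n}"
      using l i by (auto simp: M_def)
    moreover have "G_mult E n (xgen i) (xgen l) = G_mult E n (xgen l) (xgen i)"
      using l sym by (auto simp: M_def G_mult_commute_iff xgen_def nonedge_def)
    ultimately have "xgen l \<in> centraliser (G_Gamma E n) (xgen i)"
      using xgen_in_carrier by (simp add: centraliser_def)
    moreover have "ab_vec (xgen l) = v"
      by (auto simp: v ab_vec_def xgen_def unit_vec_def)
    ultimately show "v \<in> ab_vec ` centraliser (G_Gamma E n) (xgen i)"
      by blast
  qed
  ultimately show ?thesis
    using not_rank_at_most_if_independent[OF independent_unit_vecs[OF \<open>finite M\<close>]]
      \<open>finite M\<close> deg by simp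
qed

lemma rank_centraliser_iso:
  assumes iso: "\<phi> \<in> iso (G_Gamma E n) (G_Gamma E n)" and g: "g \<in> carrier (G_Gamma E n)"
    and rank: "rank_at_most d (ab_vec ` centraliser (G_Gamma E n) (\<phi> g))"
  shows "rank_at_most d (ab_vec ` centraliser (G_Gamma E n) g)"
proof -
  define \<psi> where "\<psi> = inv_into (carrier (G_Gamma E n)) \<phi>"
  have hom: "\<phi> \<in> hom (G_Gamma E n) (G_Gamma E n)" "\<psi> \<in> hom (G_Gamma E n) (G_Gamma E n)"
    using iso G.iso_set_sym[OF iso] by (simp_all add: \<psi>_def iso_def)
  define L where "L = (\<lambda>v m. \<Sum>i\<in>{1..n}. v i * ab_vec (\<psi> (xgen i)) m)"
  have "ab_vec h = L (ab_vec (\<phi> h))" if "h \<in> carrier (G_Gamma E n)" for h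
  proof -
    have "\<psi> (\<phi> h) = h"
      using that iso by (simp add: \<psi>_def iso_def bij_betw_def)
    then have "fst h = (\<lambda>m. \<Sum>i\<in>{1..n}. fst (\<phi> h) i * fst (\<psi> (xgen i)) m)"
      using fst_hom_G_Gamma[OF hom(2) hom_in_carrier[OF hom(1) that]] by simp
    then show ?thesis
      by (simp add: L_def ab_vec_def)
  qed
  then have "ab_vec ` centraliser (G_Gamma E n) g \<subseteq> L ` ab_vec ` centraliser (G_Gamma E n) (\<phi> g)"
    using hom_centraliser[OF hom(1) g] by (force simp: centraliser_def)
  moreover have "rank_at_most d (L ` ab_vec ` centraliser (G_Gamma E n) (\<phi> g))"
    using rank_at_most_image[OF linear_lincomb rank] by (simp add: L_def)
  ultimately show ?thesis
    by (rule rank_at_most_subset)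
qed

lemma aut_xgen_coord_outside_V_d:
  assumes sym: "\<forall>i j. E i j \<longrightarrow> E j i" and irrefl: "\<forall>i. \<not> E i i"
    and iso: "\<phi> \<in> iso (G_Gamma E n) (G_Gamma E n)" and i: "i \<in> V_d E n d" and m: "m \<notin> V_d E n d"
  shows "fst (\<phi> (xgen i)) m = 0"
proof (rule ccontr)
  assume nonzero: "fst (\<phi> (xgen i)) m \<noteq> 0"
  have i_le: "i \<in> {1..n}" "d \<le> vdeg E n i"
    using i by (auto simp: V_d_def)
  have "\<phi> (xgen i) \<in> carrier (G_Gamma E n)"
    using iso by (intro hom_in_carrier[OF _ xgen_in_carrier[OF i_le(1)]]) (simp add: iso_def)
  moreover have "vdeg E n m < d"
    using calculation nonzero m G_carrier_fst_zero by (fastforce simp: V_d_def)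
  ultimately have "rank_at_most d (ab_vec ` centraliser (G_Gamma E n) (\<phi> (xgen i)))"
    using rank_centraliser_le_degree[OF sym] nonzero by blast
  then have "rank_at_most d (ab_vec ` centraliser (G_Gamma E n) (xgen i))"
    by (rule rank_centraliser_iso[OF iso xgen_in_carrier[OF i_le(1)]])
  then show False
    using not_rank_centraliser_xgen[OF sym irrefl i_le] by blast
qed

lemma aut_image_H_d_subset:
  assumes sym: "\<forall>i j. E i j \<longrightarrow> E j i" and irrefl: "\<forall>i. \<not> E i i"
    and iso: "\<phi> \<in> iso (G_Gamma E n) (G_Gamma E n)"
  shows "\<phi> ` H_d E n d \<subseteq> H_d E n d"
proof
  fix y assume "y \<in> \<phi> ` H_d E n d"
  then obtain h where h: "h \<in> carrier (G_Gamma E n)" "\<forall>i. i \<notin> V_d E n d \<longrightarrow> fst h i = 0" and y: "y = \<phi> h"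
    by (auto simp: H_d_def)
  have hom: "\<phi> \<in> hom (G_Gamma E n) (G_Gamma E n)"
    using iso by (simp add: iso_def)
  have "fst y m = 0" if "m \<notin> V_d E n d" for m
  proof -
    have "fst y m = (\<Sum>i\<in>{1..n}. fst h i * fst (\<phi> (xgen i)) m)"
      using fst_hom_G_Gamma[OF hom h(1)] y by simp
    also have "\<dots> = 0"
      using h(2) aut_xgen_coord_outside_V_d[OF sym irrefl iso _ that] by (intro sum.neutral) auto
    finally show ?thesis .
  qed
  moreover have "y \<in> carrier (G_Gamma E n)"
    unfolding y by (rule hom_in_carrier[OF hom h(1)])
  ultimately show "y \<in> H_d E n d"
    by (simp add: H_d_def)
qed

lemma subgroup_H_d: "subgroup (H_d E n d) (G_Gamma E n)"
proof
  fix g h assume "g \<in> H_d E n d" "h \<in> H_d E n d"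
  then show "g \<otimes>\<^bsub>G_Gamma E n\<^esub> h \<in> H_d E n d"
    using G.m_closed by (auto simp: H_d_def)
next
  fix g assume "g \<in> H_d E n d"
  then show "inv\<^bsub>G_Gamma E n\<^esub> g \<in> H_d E n d"
    using G.inv_closed by (auto simp: H_d_def)
qed (auto simp: H_d_def G_carrier_def)

end

theorem theorem4p3:
  fixes E :: "nat \<Rightarrow> nat \<Rightarrow> bool" and n d :: nat
  assumes "\<forall>i j. E i j \<longrightarrow> E j i"
    and "\<forall>i. \<not> E i i"
    and "1 \<le> d" and "d \<le> n - 1"
  shows "subgroup (H_d E n d) (G_Gamma E n) \<and>
         (\<forall>\<phi> \<in> iso (G_Gamma E n) (G_Gamma E n). \<phi> ` H_d E n d = H_d E n d)"
proof -
  interpret G: group "G_Gamma E n"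
    by (rule group_G_Gamma)
  have "\<phi> ` H_d E n d = H_d E n d" if "\<phi> \<in> iso (G_Gamma E n) (G_Gamma E n)" for \<phi>
    using G.aut_image_eq_if_aut_image_subset[OF aut_image_H_d_subset[OF assms(1,2)] _ that]
    by (auto simp: H_d_def)
  then show ?thesis
    using subgroup_H_d by blast
qed

end
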